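(* Let $H_0=p^2+|k|$ on $L^2(\mathbb{R}^6)$. Fix $\epsilon>0$ and an energy $E\neq0$. Then there exists $\delta>0$ such that $H_0$ satisfies a Mourre estimate at $E$ with conjugate operator $A$, width $\delta$, and constant $\alpha=E-\epsilon$ if $E>0$, and constant $\alpha=c$ if $E<0$, where $c>0$ is any positive constant.
   Context: $X=(x,y)\in\mathbb{R}^6$, $P=(p,k)$, $p=-i\nabla_x$, $k=-i\nabla_y$; $A=\frac12(P\cdot X+X\cdot P)$; $[H_0,iA]=2p^2+|k|$. A self-adjoint $T$ satisfies a Mourre estimate at $E$ with conjugate operator $A$, constant $\alpha$ and width $\delta$ if, with $\Delta=(E-\delta,E+\delta)$, $E_\Delta(T)[T,iA]E_\Delta(T)\ge\alpha E_\Delta(T)+K$ for some compact $K$ ($E_\Delta$ = spectral projection). *)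

theory Defs
  imports "HOL-Analysis.Analysis"
begin

text \<open>Momentum-space (Fourier) representation of L^2(R^6) = L^2(R^3_x x R^3_y).
  A point of momentum space is a pair (p, k) with p, k in R^3.
  Square-integrable complex functions (not quotiented by a.e. equality).\<close>

definition L2 :: "('a::euclidean_space \<Rightarrow> complex) set" where
  "L2 = {f. f \<in> borel_measurable lborel \<and> integrable lborel (\<lambda>x. (norm (f x))\<^sup>2)}"

definition l2inner :: "('a::euclidean_space \<Rightarrow> complex) \<Rightarrow> ('a \<Rightarrow> complex) \<Rightarrow> complex" where
  "l2inner f g = (LINT x|lborel. cnj (f x) * g x)"

definition l2norm :: "('a::euclidean_space \<Rightarrow> complex) \<Rightarrow> real" where
  "l2norm f = sqrt (LINT x|lborel. (norm (f x))\<^sup>2)"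

definition compact_op_L2 :: "(('a::euclidean_space \<Rightarrow> complex) \<Rightarrow> ('a \<Rightarrow> complex)) \<Rightarrow> bool" where
  "compact_op_L2 K \<longleftrightarrow>
     (\<forall>f\<in>L2. K f \<in> L2) \<and>
     (\<forall>f\<in>L2. \<forall>g\<in>L2. K (\<lambda>x. f x + g x) = (\<lambda>x. K f x + K g x)) \<and>
     (\<forall>f\<in>L2. \<forall>a::complex. K (\<lambda>x. a * f x) = (\<lambda>x. a * K f x)) \<and>
     (\<forall>u::nat \<Rightarrow> 'a \<Rightarrow> complex. (\<forall>n. u n \<in> L2) \<and> bounded (range (\<lambda>n. l2norm (u n))) \<longrightarrow>
        (\<exists>r g. strict_mono r \<and> g \<in> L2 \<and>
               (\<lambda>n. l2norm (\<lambda>x. K (u (r n)) x - g x)) \<longlonglongrightarrow> 0))"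

text \<open>Mourre estimate for a self-adjoint multiplication operator T = (multiplication by h)
  whose commutator [T, iA] is the multiplication operator by c:
  E_Delta(T) [T,iA] E_Delta(T) >= alpha E_Delta(T) + K with K compact, Delta = (E-delta,E+delta),
  where E_Delta(T) is multiplication by the indicator of h^{-1}(Delta).
  The operator inequality is expressed through quadratic forms on L^2.\<close>

definition mourre_estimate_mult ::
  "('a::euclidean_space \<Rightarrow> real) \<Rightarrow> ('a \<Rightarrow> real) \<Rightarrow> real \<Rightarrow> real \<Rightarrow> real \<Rightarrow> bool" where
  "mourre_estimate_mult h c E \<alpha> \<delta> \<longleftrightarrow>
     (\<exists>K. compact_op_L2 K \<and>
        (\<forall>f\<in>L2.
           let g = (\<lambda>x. of_real (indicator {x. h x \<in> {E - \<delta><..<E + \<delta>}} x) * f x) in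
           l2inner f (K f) \<in> \<real> \<and>
           Re (l2inner f (K f)) \<le>
             (LINT x|lborel. c x * (norm (g x))\<^sup>2) - \<alpha> * (LINT x|lborel. (norm (g x))\<^sup>2)))"

text \<open>Symbols in momentum representation: H_0 = p^2 + |k|, and [H_0, iA] = 2p^2 + |k|.\<close>

definition H0_symbol :: "((real^3) \<times> (real^3)) \<Rightarrow> real" where
  "H0_symbol = (\<lambda>(p, k). (norm p)\<^sup>2 + norm k)"

definition H0_comm_symbol :: "((real^3) \<times> (real^3)) \<Rightarrow> real" where
  "H0_comm_symbol = (\<lambda>(p, k). 2 * (norm p)\<^sup>2 + norm k)"

end

theory Submission
  imports Defs
begin

text \<open>In momentum representation both \<open>H\<^sub>0\<close> and \<open>[H\<^sub>0, iA]\<close> are multiplication operators,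
  with symbols \<open>h = p\<^sup>2 + |k|\<close> and \<open>c = 2p\<^sup>2 + |k|\<close>.  Since \<open>h \<le> c\<close>, on the spectral shell
  \<open>E - \<delta> < h < E + \<delta>\<close> we have \<open>c > E - \<delta> \<ge> E - \<epsilon>\<close>, so the estimate holds even with the
  compact remainder \<open>K = 0\<close>.  For \<open>E < 0\<close> and \<open>\<delta> < |E|\<close> the shell is empty because \<open>h \<ge> 0\<close>,
  so the spectral projection vanishes and every constant is admissible.\<close>

lemma compact_op_L2_zero: "compact_op_L2 (\<lambda>(f::'a::euclidean_space \<Rightarrow> complex) x. 0)"
proof -
  have zero_L2: "(\<lambda>x::'a. 0::complex) \<in> L2"
    unfolding L2_def by simp
  have "l2norm (\<lambda>x::'a. (0::complex) - 0) = 0"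
    unfolding l2norm_def by simp
  then show ?thesis
    unfolding compact_op_L2_def using zero_L2 strict_mono_id
    by (intro conjI allI ballI impI exI[of _ id] exI[of _ "\<lambda>x. 0"]) auto
qed

lemma L2_mult_indicator:
  assumes f: "f \<in> L2" and S: "S \<in> sets borel"
  shows "(\<lambda>x. of_real (indicator S x) * f x) \<in> L2"
proof -
  have f_meas: "f \<in> borel_measurable borel" and f_int: "integrable lborel (\<lambda>x. (norm (f x))\<^sup>2)"
    using f unfolding L2_def by auto
  have meas: "(\<lambda>x. of_real (indicator S x) * f x) \<in> borel_measurable borel"
    using f_meas S by measurable
  have "integrable lborel (\<lambda>x. (norm (of_real (indicator S x) * f x))\<^sup>2)"
    by (rule Bochner_Integration.integrable_bound[OF f_int]) (use meas in \<open>auto simp: indicator_def\<close>)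
  with meas show ?thesis
    unfolding L2_def by simp
qed

text \<open>The upper bound \<open>M\<close> only serves to make \<open>c |g|\<^sup>2\<close> integrable; otherwise its
  Bochner integral would be the junk value \<open>0\<close>.\<close>

lemma integral_weighted_norm_ge:
  fixes g :: "'a::euclidean_space \<Rightarrow> complex"
  assumes g: "g \<in> L2" and c: "c \<in> borel_measurable borel"
    and bounds: "\<And>x. g x \<noteq> 0 \<Longrightarrow> \<alpha> \<le> c x \<and> c x \<le> M"
  shows "\<alpha> * (LINT x|lborel. (norm (g x))\<^sup>2) \<le> (LINT x|lborel. c x * (norm (g x))\<^sup>2)"
proof -
  have g_meas: "g \<in> borel_measurable borel" and g_int: "integrable lborel (\<lambda>x. (norm (g x))\<^sup>2)"
    using g unfolding L2_def by auto
  have dominated: "norm (c x * (norm (g x))\<^sup>2) \<le> norm ((\<bar>\<alpha>\<bar> + \<bar>M\<bar>) * (norm (g x))\<^sup>2)" for x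
  proof (cases "g x = 0")
    case False
    then have "\<bar>c x\<bar> \<le> \<bar>\<alpha>\<bar> + \<bar>M\<bar>"
      using bounds by fastforce
    then show ?thesis
      by (simp add: abs_mult mult_right_mono)
  qed simp
  have weighted_int: "integrable lborel (\<lambda>x. c x * (norm (g x))\<^sup>2)"
    by (rule Bochner_Integration.integrable_bound[OF integrable_mult_right[OF g_int, of "\<bar>\<alpha>\<bar> + \<bar>M\<bar>"]])
       (use g_meas c dominated in \<open>auto intro!: AE_I2\<close>)
  have pointwise: "\<alpha> * (norm (g x))\<^sup>2 \<le> c x * (norm (g x))\<^sup>2" for x
    using bounds[of x] by (cases "g x = 0") (auto intro: mult_right_mono)
  have "\<alpha> * (LINT x|lborel. (norm (g x))\<^sup>2) = (LINT x|lborel. \<alpha> * (norm (g x))\<^sup>2)"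
    by simp
  also have "\<dots> \<le> (LINT x|lborel. c x * (norm (g x))\<^sup>2)"
    by (rule integral_mono[OF integrable_mult_right[OF g_int] weighted_int pointwise])
  finally show ?thesis .
qed

lemma mourre_estimate_mult_of_pointwise_bounds:
  fixes h c :: "'a::euclidean_space \<Rightarrow> real"
  assumes h: "h \<in> borel_measurable borel" and c: "c \<in> borel_measurable borel"
    and bounds: "\<And>x. E - \<delta> < h x \<Longrightarrow> h x < E + \<delta> \<Longrightarrow> \<alpha> \<le> c x \<and> c x \<le> M"
  shows "mourre_estimate_mult h c E \<alpha> \<delta>"
  unfolding mourre_estimate_mult_def
proof (intro exI[of _ "\<lambda>f x. 0"] conjI compact_op_L2_zero ballI)
  fix f :: "'a \<Rightarrow> complex"
  assume f: "f \<in> L2"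
  define g where "g = (\<lambda>x. of_real (indicator {x. h x \<in> {E - \<delta><..<E + \<delta>}} x) * f x)"
  have "{x. h x \<in> {E - \<delta><..<E + \<delta>}} \<in> sets borel"
    using h by measurable
  then have "g \<in> L2"
    unfolding g_def by (rule L2_mult_indicator[OF f])
  moreover have "g x \<noteq> 0 \<Longrightarrow> \<alpha> \<le> c x \<and> c x \<le> M" for x
    using bounds by (auto simp: g_def indicator_def split: if_splits)
  ultimately have "\<alpha> * (LINT x|lborel. (norm (g x))\<^sup>2) \<le> (LINT x|lborel. c x * (norm (g x))\<^sup>2)"
    by (rule integral_weighted_norm_ge[OF _ c])
  moreover have "l2inner f (\<lambda>x. 0) = 0"
    unfolding l2inner_def by simp
  ultimately show "let g = \<lambda>x. of_real (indicator {x. h x \<in> {E - \<delta><..<E + \<delta>}} x) * f x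
    in l2inner f ((\<lambda>f x. 0) f) \<in> \<real> \<and>
       Re (l2inner f ((\<lambda>f x. 0) f))
         \<le> (LINT x|lborel. c x * (norm (g x))\<^sup>2) - \<alpha> * (LINT x|lborel. (norm (g x))\<^sup>2)"
    unfolding g_def Let_def by simp
qed

lemma borel_measurable_H0_symbol: "H0_symbol \<in> borel_measurable borel"
  by (rule borel_measurable_continuous_onI)
     (auto simp: H0_symbol_def case_prod_beta intro!: continuous_intros)

lemma borel_measurable_H0_comm_symbol: "H0_comm_symbol \<in> borel_measurable borel"
  by (rule borel_measurable_continuous_onI)
     (auto simp: H0_comm_symbol_def case_prod_beta intro!: continuous_intros)

lemma H0_symbol_nonneg: "0 \<le> H0_symbol x"
  by (simp add: H0_symbol_def case_prod_beta)

lemma H0_symbol_le_comm_symbol: "H0_symbol x \<le> H0_comm_symbol x"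
  by (simp add: H0_symbol_def H0_comm_symbol_def case_prod_beta)

lemma H0_comm_symbol_le_double: "H0_comm_symbol x \<le> 2 * H0_symbol x"
  by (simp add: H0_symbol_def H0_comm_symbol_def case_prod_beta)

lemma mourre_estimate_H0:
  assumes "\<And>x. E - \<delta> < H0_symbol x \<Longrightarrow> H0_symbol x < E + \<delta> \<Longrightarrow> \<alpha> \<le> H0_comm_symbol x"
  shows "mourre_estimate_mult H0_symbol H0_comm_symbol E \<alpha> \<delta>"
proof (rule mourre_estimate_mult_of_pointwise_bounds
    [OF borel_measurable_H0_symbol borel_measurable_H0_comm_symbol, where M = "2 * (E + \<delta>)"])
  fix x
  assume "E - \<delta> < H0_symbol x" "H0_symbol x < E + \<delta>"
  with assms H0_comm_symbol_le_double[of x]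
  show "\<alpha> \<le> H0_comm_symbol x \<and> H0_comm_symbol x \<le> 2 * (E + \<delta>)"
    by auto
qed

theorem lemma3p1:
  fixes \<epsilon> E :: real
  assumes "\<epsilon> > 0" and "E \<noteq> 0"
  shows "\<exists>\<delta>>0.
           (E > 0 \<longrightarrow> mourre_estimate_mult H0_symbol H0_comm_symbol E (E - \<epsilon>) \<delta>) \<and>
           (E < 0 \<longrightarrow> (\<forall>c>0. mourre_estimate_mult H0_symbol H0_comm_symbol E c \<delta>))"
proof (intro exI[of _ "min \<epsilon> (\<bar>E\<bar>/2)"] conjI impI allI)
  show "0 < min \<epsilon> (\<bar>E\<bar>/2)"
    using assms by auto
next
  show "mourre_estimate_mult H0_symbol H0_comm_symbol E (E - \<epsilon>) (min \<epsilon> (\<bar>E\<bar>/2))"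
  proof (rule mourre_estimate_H0)
    fix x
    assume "E - min \<epsilon> (\<bar>E\<bar>/2) < H0_symbol x"
    then show "E - \<epsilon> \<le> H0_comm_symbol x"
      using H0_symbol_le_comm_symbol[of x] by linarith
  qed
next
  fix c :: real
  assume "E < 0"
  show "mourre_estimate_mult H0_symbol H0_comm_symbol E c (min \<epsilon> (\<bar>E\<bar>/2))"
  proof (rule mourre_estimate_H0)
    fix x
    assume "H0_symbol x < E + min \<epsilon> (\<bar>E\<bar>/2)"
    with \<open>E < 0\<close> H0_symbol_nonneg[of x] show "c \<le> H0_comm_symbol x"
      by linarith
  qed
qed

end
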